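(* Let $M\subset\mathbb{R}^2$ be closed, $z\in M$ and $u>0$. Suppose there exist sequences $(z_n)$ in $M$ and $(\rho_n)$ in $(0,\infty)$ such that $z_n\to z$ and, for each $n\in\mathbb{N}$: (i) $z_n\in(z+S^u)\setminus\{z\}$, and (ii) either $(z_n+A^{3u}_{\rho_n})\cap M=\{z_n\}$ or $(z_n-A^{3u}_{\rho_n})\cap M=\{z_n\}$. Then $M\notin\mathcal{D}_2$.
   Context: For $r>0$ and $u>0$: $A^u_r=\{(x,y):0\le x\le r,\ |y|\le ux\}$ and $S^u=\{(x,y):x\in\mathbb{R},\ |y|\le u|x|\}$. A function on an open convex set $C\subset\mathbb{R}^d$ is DC if it is the difference of two convex functions on $C$. $\mathcal{D}_2$ denotes the family consisting of $\varnothing$ together with all nonempty closed sets $A\subset\mathbb{R}^2$ whose distance function $d_A=\operatorname{dist}(\cdot,A)$ is DC on $\mathbb{R}^2$. *)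

theory Defs
  imports "HOL-Analysis.Analysis"
begin

definition Aset :: "real \<Rightarrow> real \<Rightarrow> (real \<times> real) set" where
  "Aset u r = {(x, y). 0 \<le> x \<and> x \<le> r \<and> \<bar>y\<bar> \<le> u * x}"

definition Sset :: "real \<Rightarrow> (real \<times> real) set" where
  "Sset u = {(x, y). \<bar>y\<bar> \<le> u * \<bar>x\<bar>}"

definition DC_on :: "'a::real_vector set \<Rightarrow> ('a \<Rightarrow> real) \<Rightarrow> bool" where
  "DC_on C f \<longleftrightarrow> (\<exists>g h. convex_on C g \<and> convex_on C h \<and> (\<forall>x\<in>C. f x = g x - h x))"

definition D2 :: "(real \<times> real) set set" where
  "D2 = {A. A = {} \<or> (A \<noteq> {} \<and> closed A \<and> DC_on UNIV (\<lambda>x. infdist x A))}"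

end

(*
  Suppose dist(-, M) = g - h with g, h convex. As h is midpoint convex and dist vanishes on M, at a
  point x of M the symmetric second difference g(x+v) + g(x-v) - 2 g(x) dominates
  dist(x+v, M) + dist(x-v, M).

  Write z_n - z = t_n d_n with t_n the absolute value of the first coordinate, so d_n = (+-1, m_n)
  with |m_n| <= u. For s <= rho_n/2 one of the points z_n +- s d_n lies on the axis of the cone
  z_n +- A^{3u}_{rho_n}, which meets M only at its vertex, hence has distance at least 2u s/(1+3u)
  from M. Second difference quotients of convex functions increase with the step, so the second
  difference of g at z_n with step t_n d_n is at least 2u t_n/(1+3u).

  But that second difference is o(t_n), since its endpoints are z and z + 2 t_n d_n and, along a
  subsequence, d_n -> d_0: on the ray z + s d_0 the slopes of g are monotone and hence converge as
  s -> 0+, and the local Lipschitz continuity of g absorbs the change of direction.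
*)
theory Submission
  imports Defs
begin

definition second_diff :: "('a::real_vector \<Rightarrow> real) \<Rightarrow> 'a \<Rightarrow> 'a \<Rightarrow> real" where
  "second_diff g x v = g (x + v) + g (x - v) - 2 * g x"

lemma convex_on_slope_mono:
  fixes g :: "'a::real_vector \<Rightarrow> real"
  assumes g: "convex_on UNIV g" and "0 < s" "s \<le> t"
  shows "(g (x + s *\<^sub>R d) - g x) / s \<le> (g (x + t *\<^sub>R d) - g x) / t"
proof -
  have combination: "x + s *\<^sub>R d = (1 - s/t) *\<^sub>R x + (s/t) *\<^sub>R (x + t *\<^sub>R d)"
    using assms by (simp add: algebra_simps)
  have "g (x + s *\<^sub>R d) \<le> (1 - s/t) * g x + (s/t) * g (x + t *\<^sub>R d)"
    unfolding combination by (rule convex_onD[OF g]) (use assms in auto)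
  then show ?thesis
    using assms by (simp add: field_simps)
qed

lemma convex_on_slope_lower_bound:
  fixes g :: "'a::real_vector \<Rightarrow> real"
  assumes g: "convex_on UNIV g" and "0 < s"
  shows "g x - g (x - d) \<le> (g (x + s *\<^sub>R d) - g x) / s"
proof -
  have combination: "x = (1 - s/(1+s)) *\<^sub>R (x + s *\<^sub>R d) + (s/(1+s)) *\<^sub>R (x - d)"
    using assms by (simp add: field_simps scaleR_add_right scaleR_diff_right flip: scaleR_add_left)
  have "g x \<le> (1 - s/(1+s)) * g (x + s *\<^sub>R d) + (s/(1+s)) * g (x - d)"
    by (subst combination, rule convex_onD[OF g]) (use assms in auto)
  also have "\<dots> = (g (x + s *\<^sub>R d) + s * g (x - d)) / (1+s)"
  proof -
    have "1 - s/(1+s) = 1/(1+s)"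
      using \<open>0 < s\<close> by (simp add: field_simps)
    then show ?thesis
      by (simp add: add_divide_distrib)
  qed
  finally show ?thesis
    using \<open>0 < s\<close> by (simp add: field_split_simps)
qed

lemma second_diff_nonneg:
  assumes "convex_on UNIV g"
  shows "0 \<le> second_diff g x v"
proof -
  have "x = (1/2::real) *\<^sub>R (x + v) + (1 - 1/2) *\<^sub>R (x - v)"
    by (simp add: algebra_simps flip: scaleR_add_left)
  then have "g x \<le> (1/2) * g (x + v) + (1 - 1/2) * g (x - v)"
    using convex_onD[OF assms, of "1/2" "x + v" "x - v"] by simp
  then show ?thesis
    unfolding second_diff_def by simp
qed

lemma second_diff_quotient_mono:
  fixes g :: "'a::real_vector \<Rightarrow> real"
  assumes g: "convex_on UNIV g" and "0 < s" "s \<le> t"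
  shows "second_diff g x (s *\<^sub>R v) / s \<le> second_diff g x (t *\<^sub>R v) / t"
proof -
  have quotient: "second_diff g x (r *\<^sub>R v) / r
      = (g (x + r *\<^sub>R v) - g x) / r + (g (x + r *\<^sub>R (-v)) - g x) / r" for r
    unfolding second_diff_def by (simp add: field_split_simps)
  show ?thesis
    unfolding quotient
    using convex_on_slope_mono[OF assms, of x v] convex_on_slope_mono[OF assms, of x "-v"]
    by linarith
qed

lemma convex_on_extrapolation:
  fixes g :: "'a::real_vector \<Rightarrow> real"
  assumes g: "convex_on UNIV g" and "c \<ge> 0"
  shows "(1 + c) * (g y - g x) \<le> g (y + c *\<^sub>R (y - x)) - g x"
proof -
  define w where "w = y + c *\<^sub>R (y - x)"
  define l where "l = 1 / (1 + c)"
  have "0 \<le> l" "l \<le> 1" "l * (1 + c) = 1"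
    unfolding l_def using \<open>c \<ge> 0\<close> by auto
  moreover have "(1 - l) *\<^sub>R x + l *\<^sub>R w = x + (l * (1 + c)) *\<^sub>R (y - x)"
    unfolding w_def by (simp add: scaleR_diff_left scaleR_add_right scaleR_diff_right distrib_left scaleR_add_left)
  ultimately have "y = (1 - l) *\<^sub>R x + l *\<^sub>R w"
    by simp
  then have "g y \<le> (1 - l) * g x + l * g w"
    using convex_onD[OF g \<open>0 \<le> l\<close> \<open>l \<le> 1\<close>] by simp
  then have "g y - g x \<le> l * (g w - g x)"
    by (simp add: algebra_simps)
  then have "(1 + c) * (g y - g x) \<le> (1 + c) * l * (g w - g x)"
    using \<open>c \<ge> 0\<close> by (simp add: mult_left_mono)
  then show ?thesis
    unfolding w_def using \<open>l * (1 + c) = 1\<close> by (simp add: mult.commute)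
qed

lemma convex_on_increment_le_on_cball:
  fixes g :: "'a::real_normed_vector \<Rightarrow> real"
  assumes g: "convex_on UNIV g" and "R > 0" and B: "\<forall>w\<in>cball z (2*R). \<bar>g w\<bar> \<le> B"
    and x: "x \<in> cball z R" and y: "y \<in> cball z R"
  shows "g y - g x \<le> 2*B/R * dist x y"
proof (cases "x = y")
  case False
  define r where "r = dist x y"
  have "r > 0"
    using False unfolding r_def by simp
  \<comment> \<open>extrapolate from x through y up to the point w at distance R beyond y, where still |g| \<le> B\<close>
  define w where "w = y + (R/r) *\<^sub>R (y - x)"
  have "dist y w = R"
    unfolding w_def r_def using \<open>R > 0\<close> False by (simp add: dist_norm norm_minus_commute)
  then have "w \<in> cball z (2*R)"
    using y dist_triangle[of z w y] by simp
  moreover have "x \<in> cball z (2*R)"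
    using x \<open>R > 0\<close> by auto
  ultimately have "\<bar>g w\<bar> \<le> B" "\<bar>g x\<bar> \<le> B"
    using B by auto
  moreover have "(1 + R/r) * (g y - g x) \<le> g w - g x"
    unfolding w_def using \<open>R > 0\<close> \<open>r > 0\<close> by (intro convex_on_extrapolation[OF g]) simp
  ultimately have "R/r * (g y - g x) \<le> 2*B"
  proof (cases "g y - g x \<le> 0")
    case True
    then have "R/r * (g y - g x) \<le> 0"
      using \<open>R > 0\<close> \<open>r > 0\<close> by (intro mult_nonneg_nonpos) auto
    then show ?thesis
      using \<open>\<bar>g x\<bar> \<le> B\<close> by linarith
  qed (auto simp: distrib_right)
  then show ?thesis
    unfolding r_def[symmetric] using \<open>R > 0\<close> \<open>r > 0\<close> by (simp add: field_simps)
qed simp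

lemma convex_on_lipschitz_on_cball:
  fixes g :: "'a::real_normed_vector \<Rightarrow> real"
  assumes "convex_on UNIV g" and "R > 0" and "\<forall>w\<in>cball z (2*R). \<bar>g w\<bar> \<le> B"
  shows "(2*B/R)-lipschitz_on (cball z R) g"
proof (rule lipschitz_onI)
  have "\<bar>g z\<bar> \<le> B"
    using assms(2,3) by simp
  then show "0 \<le> 2*B/R"
    using \<open>R > 0\<close> by simp
  fix x y assume "x \<in> cball z R" "y \<in> cball z R"
  then show "dist (g x) (g y) \<le> 2*B/R * dist x y"
    using convex_on_increment_le_on_cball[OF assms, of x y] convex_on_increment_le_on_cball[OF assms, of y x]
    by (simp add: dist_real_def abs_le_iff dist_commute)
qed

lemma convex_on_lipschitz_on_cball_exists:
  fixes g :: "'a::euclidean_space \<Rightarrow> real"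
  assumes g: "convex_on UNIV g" and "R > 0"
  obtains L where "L-lipschitz_on (cball z R) g"
proof -
  have "continuous_on (cball z (2*R)) g"
    using convex_on_continuous[OF open_UNIV g] continuous_on_subset by blast
  then have "bounded (g ` cball z (2*R))"
    by (intro compact_imp_bounded compact_continuous_image compact_cball)
  then obtain B where "\<forall>w\<in>cball z (2*R). \<bar>g w\<bar> \<le> B"
    unfolding bounded_real by auto
  then show ?thesis
    using that convex_on_lipschitz_on_cball[OF g \<open>R > 0\<close>] by blast
qed

lemma second_diff_lipschitz_on:
  assumes "L-lipschitz_on S g" and "x + v \<in> S" "x - v \<in> S" "x \<in> S"
    and "x' + v' \<in> S" "x' - v' \<in> S" "x' \<in> S"
  shows "second_diff g x v
    \<le> second_diff g x' v' + L * (dist (x + v) (x' + v') + dist (x - v) (x' - v') + 2 * dist x x')"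
  using lipschitz_onD[OF assms(1,2,5)] lipschitz_onD[OF assms(1,3,6)] lipschitz_onD[OF assms(1,4,7)]
  unfolding second_diff_def dist_real_def by (simp add: algebra_simps abs_le_iff)

lemma convex_on_second_diff_along_ray:
  fixes g :: "'a::real_vector \<Rightarrow> real"
  assumes g: "convex_on UNIV g"
  shows "((\<lambda>s. second_diff g (z + s *\<^sub>R d) (s *\<^sub>R d) / s) \<longlongrightarrow> 0) (at_right 0)"
proof (rule tendstoI)
  fix \<epsilon> :: real assume "\<epsilon> > 0"
  define q where "q s = (g (z + s *\<^sub>R d) - g z) / s" for s
  have "bdd_below (q ` {0<..})"
    unfolding q_def using convex_on_slope_lower_bound[OF g] by (intro bdd_belowI2) auto
  \<comment> \<open>the slopes q decrease to their infimum as s \<rightarrow> 0+, so q (2 s) - q s \<rightarrow> 0\<close>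
  obtain s0 where "s0 > 0" and s0: "q s0 < Inf (q ` {0<..}) + \<epsilon>/4"
    using cInf_lessD[of "q ` {0<..}" "Inf (q ` {0<..}) + \<epsilon>/4"] \<open>\<epsilon> > 0\<close> by auto
  have "dist (second_diff g (z + s *\<^sub>R d) (s *\<^sub>R d) / s) 0 < \<epsilon>" if "0 < s" "s < s0/2" for s
  proof -
    have "q (2 * s) \<le> q s0"
      unfolding q_def using that by (intro convex_on_slope_mono[OF g]) auto
    moreover have "Inf (q ` {0<..}) \<le> q s"
      using \<open>bdd_below (q ` {0<..})\<close> that by (intro cInf_lower) auto
    moreover have "second_diff g (z + s *\<^sub>R d) (s *\<^sub>R d) / s = 2 * (q (2 * s) - q s)"
      unfolding q_def second_diff_def using that by (simp add: field_simps flip: scaleR_add_left)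
    moreover have "0 \<le> second_diff g (z + s *\<^sub>R d) (s *\<^sub>R d) / s"
      using second_diff_nonneg[OF g] \<open>0 < s\<close> by simp
    ultimately show ?thesis
      using s0 by (simp add: dist_real_def)
  qed
  then show "\<forall>\<^sub>F s in at_right 0. dist (second_diff g (z + s *\<^sub>R d) (s *\<^sub>R d) / s) 0 < \<epsilon>"
    using \<open>s0 > 0\<close> unfolding eventually_at_right_field by (intro exI[of _ "s0/2"]) auto
qed

lemma second_diff_change_of_direction:
  fixes g :: "'a::real_normed_vector \<Rightarrow> real"
  assumes L: "L-lipschitz_on (cball z R) g" and "0 < T" "T \<le> 1/2" "norm a \<le> R" "norm b \<le> R"
  shows "second_diff g (z + T *\<^sub>R a) (T *\<^sub>R a) / T
    \<le> second_diff g (z + T *\<^sub>R b) (T *\<^sub>R b) / T + 4 * L * dist a b"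
proof -
  have in_ball: "z + c *\<^sub>R v \<in> cball z R" if "0 \<le> c" "c \<le> 1" "norm v \<le> R" for c v
    using that mult_mono[of c 1 "norm v" R] by (simp add: dist_norm)
  have double: "(z + T *\<^sub>R v) + T *\<^sub>R v = z + (2*T) *\<^sub>R v" for v
    by (metis add.assoc mult_2 scaleR_add_left)
  have scale: "dist (z + c *\<^sub>R a) (z + c *\<^sub>R b) = \<bar>c\<bar> * dist a b" for c
    by (metis dist_add_cancel dist_norm norm_scaleR scaleR_diff_right)
  have "second_diff g (z + T *\<^sub>R a) (T *\<^sub>R a)
      \<le> second_diff g (z + T *\<^sub>R b) (T *\<^sub>R b)
        + L * (dist (z + (2*T) *\<^sub>R a) (z + (2*T) *\<^sub>R b) + dist z z
               + 2 * dist (z + T *\<^sub>R a) (z + T *\<^sub>R b))"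
    using second_diff_lipschitz_on[OF L, of "z + T *\<^sub>R a" "T *\<^sub>R a" "z + T *\<^sub>R b" "T *\<^sub>R b"]
      in_ball[of "2*T"] in_ball[of T] in_ball[of 0] assms(2-5)
    unfolding double add_diff_cancel by simp
  also have "\<dots> = second_diff g (z + T *\<^sub>R b) (T *\<^sub>R b) + T * (4 * L * dist a b)"
    using \<open>T > 0\<close> unfolding scale by (simp add: algebra_simps)
  finally show ?thesis
    using \<open>T > 0\<close> by (simp add: divide_le_eq add_divide_distrib algebra_simps)
qed

lemma convex_on_second_diff_vanishes:
  fixes g :: "'a::euclidean_space \<Rightarrow> real"
  assumes g: "convex_on UNIV g" and t: "\<And>n. t n > 0" "t \<longlonglongrightarrow> 0" and dd: "dd \<longlonglongrightarrow> d0"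
  shows "(\<lambda>n. second_diff g (z + t n *\<^sub>R dd n) (t n *\<^sub>R dd n) / t n) \<longlonglongrightarrow> 0"
proof -
  define R where "R = norm d0 + 1"
  have "R > 0"
    unfolding R_def by (simp add: add_nonneg_pos)
  then obtain L where L: "L-lipschitz_on (cball z R) g"
    by (rule convex_on_lipschitz_on_cball_exists[OF g])
  have "filterlim t (at_right 0) sequentially"
    using t by (intro tendsto_imp_filterlim_at_right always_eventually) auto
  then have "(\<lambda>n. second_diff g (z + t n *\<^sub>R d0) (t n *\<^sub>R d0) / t n) \<longlonglongrightarrow> 0"
    by (rule filterlim_compose[OF convex_on_second_diff_along_ray[OF g]])
  moreover have "(\<lambda>n. 4 * L * dist (dd n) d0) \<longlonglongrightarrow> 4 * L * dist d0 d0"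
    by (intro tendsto_intros dd)
  ultimately have upper: "(\<lambda>n. second_diff g (z + t n *\<^sub>R d0) (t n *\<^sub>R d0) / t n
      + 4 * L * dist (dd n) d0) \<longlonglongrightarrow> 0"
    using tendsto_add by fastforce
  have "\<forall>\<^sub>F n in sequentially. t n < 1/2"
    using order_tendstoD(2)[OF t(2), of "1/2"] by simp
  moreover have "\<forall>\<^sub>F n in sequentially. dist (dd n) d0 < 1"
    using dd by (rule tendstoD) simp
  ultimately have bound: "\<forall>\<^sub>F n in sequentially. second_diff g (z + t n *\<^sub>R dd n) (t n *\<^sub>R dd n) / t n
      \<le> second_diff g (z + t n *\<^sub>R d0) (t n *\<^sub>R d0) / t n + 4 * L * dist (dd n) d0"
  proof eventually_elim
    case (elim n)
    then have "norm (dd n) \<le> R"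
      using norm_triangle_ineq2[of "dd n" d0] unfolding R_def dist_norm by linarith
    then show ?case
      using second_diff_change_of_direction[OF L t(1)] elim(1) unfolding R_def by simp
  qed
  have "\<forall>\<^sub>F n in sequentially. 0 \<le> second_diff g (z + t n *\<^sub>R dd n) (t n *\<^sub>R dd n) / t n"
    using second_diff_nonneg[OF g] t(1) by (simp add: less_imp_le)
  from tendsto_sandwich[OF this bound tendsto_const upper] show ?thesis .
qed

lemma dist_cone_gap:
  fixes w :: "real \<times> real"
  assumes "u > 0" "0 < s" "s \<le> \<rho>/2" "\<bar>m\<bar> \<le> u" and w: "w = 0 \<or> w \<notin> Aset (3*u) \<rho>"
  shows "2*u/(1+3*u) * s \<le> dist (s *\<^sub>R (1, m)) w"
proof -
  obtain X Y where XY: "w = (X, Y)"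
    by (cases w)
  define \<delta> where "\<delta> = dist (s *\<^sub>R (1, m)) w"
  have "\<bar>s - X\<bar> \<le> \<delta>" "\<bar>s * m - Y\<bar> \<le> \<delta>"
    using dist_fst_le[of "s *\<^sub>R (1, m)" w] dist_snd_le[of "s *\<^sub>R (1, m)" w]
    unfolding \<delta>_def XY by (simp_all add: dist_real_def)
  have "\<bar>s * m\<bar> \<le> u * s"
    using assms by (simp add: abs_mult mult.commute mult_right_mono)
  \<comment> \<open>leaving the strip 0 \<le> X \<le> \<rho> costs s; leaving the opening costs 2 u s / (1 + 3 u)\<close>
  have "X < 0 \<or> X > \<rho> \<or> \<bar>Y\<bar> > 3*u*X \<or> X = 0"
    using w unfolding XY Aset_def by (auto simp: zero_prod_def)
  then have "s \<le> \<delta> \<or> 2*u * s \<le> \<delta> + 3*u * \<delta>"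
  proof (elim disjE)
    assume "\<bar>Y\<bar> > 3*u*X"
    moreover have "3*u * s - 3*u * \<delta> \<le> 3*u*X"
      using \<open>\<bar>s - X\<bar> \<le> \<delta>\<close> \<open>u > 0\<close> mult_left_mono[of "s - \<delta>" X "3*u"]
      by (simp add: right_diff_distrib)
    ultimately show ?thesis
      using \<open>\<bar>s * m - Y\<bar> \<le> \<delta>\<close> \<open>\<bar>s * m\<bar> \<le> u * s\<close> by linarith
  qed (use \<open>\<bar>s - X\<bar> \<le> \<delta>\<close> assms in auto)
  then show ?thesis
  proof
    assume "s \<le> \<delta>"
    moreover have "2*u/(1+3*u) * s \<le> s"
      using \<open>u > 0\<close> \<open>0 < s\<close> by (simp add: field_simps)
    ultimately show ?thesis
      unfolding \<delta>_def by linarith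
  next
    assume "2*u * s \<le> \<delta> + 3*u * \<delta>"
    then show ?thesis
      unfolding \<delta>_def using \<open>u > 0\<close> by (simp add: field_simps)
  qed
qed

lemma infdist_cone_axis_ge:
  fixes M :: "(real \<times> real) set" and x0 :: "real \<times> real"
  assumes "u > 0" "0 < s" "s \<le> \<rho>/2" "\<bar>m\<bar> \<le> u" and "\<bar>e\<bar> = 1" and "M \<noteq> {}"
    and cone: "((\<lambda>p. x0 + e *\<^sub>R p) ` Aset (3*u) \<rho>) \<inter> M = {x0}"
  shows "2*u/(1+3*u) * s \<le> infdist (x0 + (e * s) *\<^sub>R (1, m)) M"
proof -
  have "2*u/(1+3*u) * s \<le> dist (x0 + (e * s) *\<^sub>R (1, m)) q" if "q \<in> M" for q
  proof -
    define w where "w = e *\<^sub>R (q - x0)"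
    have "e * e = 1"
      using \<open>\<bar>e\<bar> = 1\<close> abs_mult_self_eq[of e] by simp
    then have "q = x0 + e *\<^sub>R w"
      unfolding w_def scaleR_scaleR \<open>e * e = 1\<close> by simp
    have "w = 0 \<or> w \<notin> Aset (3*u) \<rho>"
    proof (rule disjCI)
      assume "\<not> w \<notin> Aset (3*u) \<rho>"
      then have "q \<in> (\<lambda>p. x0 + e *\<^sub>R p) ` Aset (3*u) \<rho>"
        using \<open>q = x0 + e *\<^sub>R w\<close> by (intro image_eqI) auto
      then have "q = x0"
        using cone \<open>q \<in> M\<close> by blast
      then show "w = 0"
        unfolding w_def by simp
    qed
    moreover have "dist (x0 + (e * s) *\<^sub>R (1, m)) q = dist (s *\<^sub>R (1, m)) w"
    proof -
      have "x0 + (e * s) *\<^sub>R (1, m) - q = e *\<^sub>R (s *\<^sub>R (1, m) - w)"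
        unfolding w_def scaleR_diff_right scaleR_scaleR \<open>e * e = 1\<close> by (simp add: algebra_simps)
      then show ?thesis
        using \<open>\<bar>e\<bar> = 1\<close> by (simp add: dist_norm)
    qed
    ultimately show ?thesis
      using dist_cone_gap[OF assms(1-4)] by simp
  qed
  then show ?thesis
    using \<open>M \<noteq> {}\<close> unfolding infdist_notempty[OF \<open>M \<noteq> {}\<close>] by (intro cINF_greatest)
qed

lemma infdist_cone_pair_ge:
  fixes M :: "(real \<times> real) set" and x0 D :: "real \<times> real"
  assumes "u > 0" "0 < s" "s \<le> \<rho>/2" "\<bar>fst D\<bar> = 1" "\<bar>snd D\<bar> \<le> u" "M \<noteq> {}"
    and cone: "((\<lambda>p. x0 + p) ` Aset (3*u) \<rho>) \<inter> M = {x0} \<or> ((\<lambda>p. x0 - p) ` Aset (3*u) \<rho>) \<inter> M = {x0}"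
  shows "2*u/(1+3*u) * s \<le> infdist (x0 + s *\<^sub>R D) M + infdist (x0 - s *\<^sub>R D) M"
proof -
  obtain e where "\<bar>e\<bar> = 1" and e_cone: "((\<lambda>p. x0 + e *\<^sub>R p) ` Aset (3*u) \<rho>) \<inter> M = {x0}"
  proof (cases "((\<lambda>p. x0 + p) ` Aset (3*u) \<rho>) \<inter> M = {x0}")
    case True
    then show ?thesis
      using that[of 1] by simp
  next
    case False
    then show ?thesis
      using that[of "-1"] cone by simp
  qed
  define \<sigma> where "\<sigma> = fst D"
  define m where "m = \<sigma> * snd D"
  have "\<sigma> * \<sigma> = 1"
    using assms(4) abs_mult_self_eq[of \<sigma>] unfolding \<sigma>_def by simp
  then have D: "D = \<sigma> *\<^sub>R (1, m)"
    unfolding m_def \<sigma>_def by (simp add: prod_eq_iff mult.assoc[symmetric])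
  have "\<bar>m\<bar> \<le> u"
    using assms(4,5) unfolding m_def \<sigma>_def by (simp add: abs_mult)
  have bound: "2*u/(1+3*u) * s \<le> infdist (x0 + (e * s) *\<^sub>R (1, m)) M"
    using infdist_cone_axis_ge[OF assms(1-3) \<open>\<bar>m\<bar> \<le> u\<close> \<open>\<bar>e\<bar> = 1\<close> assms(6) e_cone] .
  have "e = \<sigma> \<or> e = -\<sigma>"
    using \<open>\<bar>e\<bar> = 1\<close> assms(4) unfolding \<sigma>_def by linarith
  then have "x0 + s *\<^sub>R D = x0 + (e * s) *\<^sub>R (1, m) \<or> x0 - s *\<^sub>R D = x0 + (e * s) *\<^sub>R (1, m)"
    unfolding D by (auto simp: mult.commute)
  then show ?thesis
    using bound by (elim disjE) (metis add_increasing2 infdist_nonneg, metis add_increasing infdist_nonneg)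
qed

lemma second_diff_ge_of_diff_convex:
  assumes "convex_on UNIV h" and "\<And>y. f y = g y - h y" and "f x = 0"
  shows "f (x + v) + f (x - v) \<le> second_diff g x v"
  using second_diff_nonneg[OF assms(1), of x v] assms(2)[of x] assms(2)[of "x + v"] assms(2)[of "x - v"] assms(3)
  unfolding second_diff_def by simp

lemma Sset_sequence_directions:
  fixes zs :: "nat \<Rightarrow> real \<times> real"
  assumes "zs \<longlonglongrightarrow> z" and S: "\<And>n. zs n \<in> ((\<lambda>p. z + p) ` Sset u) - {z}"
  obtains t dd d0 r where "\<And>n. t n > 0" "t \<longlonglongrightarrow> 0" "dd \<longlonglongrightarrow> d0"
    "\<And>n. zs (r n) = z + t n *\<^sub>R dd n" "\<And>n. \<bar>fst (dd n)\<bar> = 1" "\<And>n. \<bar>snd (dd n)\<bar> \<le> u"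
proof -
  define t where "t n = \<bar>fst (zs n - z)\<bar>" for n
  define dd where "dd n = (1 / t n) *\<^sub>R (zs n - z)" for n
  have "zs n - z \<in> Sset u" "zs n - z \<noteq> 0" for n
    using S[of n] by auto
  then have slope: "\<bar>snd (zs n - z)\<bar> \<le> u * t n" for n
    unfolding Sset_def t_def by (auto simp: case_prod_beta)
  have t_pos: "t n > 0" for n
  proof (rule ccontr)
    assume "\<not> t n > 0"
    then have "fst (zs n - z) = 0"
      unfolding t_def by simp
    moreover from this have "snd (zs n - z) = 0"
      using slope[of n] unfolding t_def by simp
    ultimately show False
      using \<open>zs n - z \<noteq> 0\<close> by (simp add: prod_eq_iff)
  qed
  have zs_eq: "zs n = z + t n *\<^sub>R dd n" for n
    unfolding dd_def using t_pos[of n] by simp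
  have dd_fst: "\<bar>fst (dd n)\<bar> = 1" and dd_snd: "\<bar>snd (dd n)\<bar> \<le> u" for n
    unfolding dd_def using t_pos[of n] slope[of n] by (auto simp: t_def abs_div pos_divide_le_eq)
  have "dd n \<in> {-1..1} \<times> {-u..u}" for n
    using dd_fst[of n] dd_snd[of n] by (auto simp: mem_Times_iff abs_le_iff)
  moreover have "compact ({-1..1::real} \<times> {-u..u})"
    by (intro compact_Times compact_Icc)
  ultimately obtain d0 r where "strict_mono r" "(dd \<circ> r) \<longlonglongrightarrow> d0"
    using compact_imp_seq_compact seq_compactE by metis
  moreover have "t \<longlonglongrightarrow> 0"
    unfolding t_def using tendsto_rabs[OF tendsto_fst[OF Lim_null[THEN iffD1, OF assms(1)]]] by simp
  then have "(t \<circ> r) \<longlonglongrightarrow> 0"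
    using \<open>strict_mono r\<close> by (rule LIMSEQ_subseq_LIMSEQ)
  ultimately show ?thesis
    using that[of "t \<circ> r" "dd \<circ> r" d0 r] t_pos zs_eq dd_fst dd_snd by simp
qed

lemma second_diff_quotient_ge_at_cone_vertex:
  fixes M :: "(real \<times> real) set" and x0 D :: "real \<times> real"
  assumes g: "convex_on UNIV g" and h: "convex_on UNIV h" and infdist_eq: "\<And>x. infdist x M = g x - h x"
    and "x0 \<in> M" "u > 0" "\<rho> > 0" "T > 0" "\<bar>fst D\<bar> = 1" "\<bar>snd D\<bar> \<le> u"
    and cone: "((\<lambda>p. x0 + p) ` Aset (3*u) \<rho>) \<inter> M = {x0} \<or> ((\<lambda>p. x0 - p) ` Aset (3*u) \<rho>) \<inter> M = {x0}"
  shows "2*u/(1+3*u) \<le> second_diff g x0 (T *\<^sub>R D) / T"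
proof -
  define s where "s = min T (\<rho>/2)"
  have "0 < s" "s \<le> T" "s \<le> \<rho>/2"
    unfolding s_def using \<open>T > 0\<close> \<open>\<rho> > 0\<close> by auto
  have "M \<noteq> {}"
    using \<open>x0 \<in> M\<close> by auto
  have "2*u/(1+3*u) * s \<le> infdist (x0 + s *\<^sub>R D) M + infdist (x0 - s *\<^sub>R D) M"
    using infdist_cone_pair_ge[OF \<open>u > 0\<close> \<open>0 < s\<close> \<open>s \<le> \<rho>/2\<close> assms(8,9) \<open>M \<noteq> {}\<close> cone] .
  also have "\<dots> \<le> second_diff g x0 (s *\<^sub>R D)"
    using second_diff_ge_of_diff_convex[OF h infdist_eq] \<open>x0 \<in> M\<close> by simp
  finally have "2*u/(1+3*u) \<le> second_diff g x0 (s *\<^sub>R D) / s"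
    using \<open>0 < s\<close> by (simp add: pos_le_divide_eq mult.commute)
  also have "\<dots> \<le> second_diff g x0 (T *\<^sub>R D) / T"
    using second_diff_quotient_mono[OF g \<open>0 < s\<close> \<open>s \<le> T\<close>] .
  finally show ?thesis .
qed

theorem lemma4p3:
  fixes M :: "(real \<times> real) set" and z :: "real \<times> real" and u :: real
    and zs :: "nat \<Rightarrow> real \<times> real" and \<rho> :: "nat \<Rightarrow> real"
  assumes "closed M" and "z \<in> M" and "u > 0"
    and "\<And>n. zs n \<in> M" and "\<And>n. \<rho> n > 0"
    and "zs \<longlonglongrightarrow> z"
    and "\<And>n. zs n \<in> ((\<lambda>p. z + p) ` Sset u) - {z}"
    and "\<And>n. ((\<lambda>p. zs n + p) ` Aset (3 * u) (\<rho> n)) \<inter> M = {zs n}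
            \<or> ((\<lambda>p. zs n - p) ` Aset (3 * u) (\<rho> n)) \<inter> M = {zs n}"
  shows "M \<notin> D2"
proof
  assume "M \<in> D2"
  with \<open>z \<in> M\<close> obtain g h where g: "convex_on UNIV g" and h: "convex_on UNIV h"
    and infdist_eq: "\<And>x. infdist x M = g x - h x"
    unfolding D2_def DC_on_def by blast
  obtain t dd d0 r where t: "\<And>n. t n > 0" "t \<longlonglongrightarrow> 0" and "dd \<longlonglongrightarrow> d0"
    and zs_eq: "\<And>n. zs (r n) = z + t n *\<^sub>R dd n"
    and D: "\<And>n. \<bar>fst (dd n)\<bar> = 1" "\<And>n. \<bar>snd (dd n)\<bar> \<le> u"
    using Sset_sequence_directions[OF assms(6,7)] by metis
  have "(\<lambda>n. second_diff g (zs (r n)) (t n *\<^sub>R dd n) / t n) \<longlonglongrightarrow> 0"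
    unfolding zs_eq by (rule convex_on_second_diff_vanishes[OF g t \<open>dd \<longlonglongrightarrow> d0\<close>])
  then have "\<forall>\<^sub>F n in sequentially. second_diff g (zs (r n)) (t n *\<^sub>R dd n) / t n < 2*u/(1+3*u)"
    using \<open>u > 0\<close> by (intro order_tendstoD) (auto intro: divide_pos_pos)
  then obtain n where "second_diff g (zs (r n)) (t n *\<^sub>R dd n) / t n < 2*u/(1+3*u)"
    using eventually_happens'[OF sequentially_bot] by blast
  moreover have "2*u/(1+3*u) \<le> second_diff g (zs (r n)) (t n *\<^sub>R dd n) / t n"
    using second_diff_quotient_ge_at_cone_vertex[OF g h infdist_eq assms(4) \<open>u > 0\<close> assms(5) t(1) D assms(8)] .
  ultimately show False
    by simp
qed

end
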